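(* Let $p>1$, $N\ge m$, and fix $\eta>0$. For almost all $(A,y)\in\mathbb R^{m\times N}\times\mathbb R^m$ such that $y\in R(A)$ and $\eta<\min_{Ax=y}\|x\|_p$, the unique optimal solution $x^*$ of $\min_{x\in\mathbb R^N}\|Ax-y\|_2$ subject to $\|x\|_p\le\eta$ satisfies $|\mathrm{supp}(x^* )|=N$.
   Context: $\|x\|_p:=(\sum_i|x_i|^p)^{1/p}$; $\mathrm{supp}(x)=\{i:x_i\ne0\}$; $R(A)$ is the range of $A$. "For almost all" means outside a set of Lebesgue measure zero. *)

theory Defs
  imports "HOL-Analysis.Analysis"
begin

definition pnorm :: "real \<Rightarrow> real ^ 'n \<Rightarrow> real" where
  "pnorm p x = (\<Sum>i\<in>UNIV. \<bar>x $ i\<bar> powr p) powr (1 / p)"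

definition supp :: "real ^ 'n \<Rightarrow> 'n set" where
  "supp x = {i. x $ i \<noteq> 0}"

definition constr_opt :: "real \<Rightarrow> real \<Rightarrow> real ^ 'n ^ 'm \<Rightarrow> real ^ 'm \<Rightarrow> real ^ 'n \<Rightarrow> bool" where
  "constr_opt p \<eta> A y x \<longleftrightarrow> pnorm p x \<le> \<eta> \<and>
     (\<forall>z. pnorm p z \<le> \<eta> \<longrightarrow> norm (A *v x - y) \<le> norm (A *v z - y))"

end

theory Submission
  imports Defs
begin

text \<open>
  Put \<open>E = \<eta>\<^sup>p\<close>, so that the constraint reads \<open>psum p x = \<Sum>\<^sub>i \<bar>x\<^sub>i\<bar>\<^sup>p \<le> E\<close>. This ball is compact and
  strictly midpoint convex and the residual norm is strictly convex in \<open>A x\<close>, so the minimiser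
  exists and is unique. As every solution of \<open>A x = y\<close> has \<open>\<parallel>x\<parallel>\<^sub>p > \<eta>\<close>, the minimiser lies on the
  sphere \<open>psum p x = E\<close> and has a nonzero residual \<open>r\<close>.

  If \<open>x\<^sub>i = 0\<close>, first-order optimality along the sphere in direction \<open>e\<^sub>i\<close> makes the \<open>i\<close>-th column
  \<open>a\<^sub>i\<close> of \<open>A\<close> orthogonal to \<open>r\<close>. Pick a row \<open>j\<close> with \<open>r\<^sub>j \<noteq> 0\<close>. Changing the entry \<open>A\<^sub>j\<^sub>i\<close> leaves the
  problem restricted to \<open>x\<^sub>i = 0\<close>, hence \<open>r\<close>, unchanged, but changes \<open>a\<^sub>i \<bullet> r\<close> at rate \<open>r\<^sub>j\<close>. So the
  set of such \<open>(A, y)\<close> meets every line in direction \<open>A\<^sub>j\<^sub>i\<close> at most once; being closed, it is a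
  Lebesgue null set.
\<close>

section \<open>Strict convexity of \<open>\<bar>t\<bar> powr p\<close>\<close>

lemma powr_diff_mean_value:
  fixes p u v :: real
  assumes "p > 1" "0 \<le> u" "u < v"
  obtains z where "u < z" "z < v" "v powr p - u powr p = (v - u) * (p * z powr (p - 1))"
proof -
  have deriv: "DERIV (\<lambda>t. t powr p) t :> p * t powr (p - 1)" if "t > 0" for t
    using that by (rule has_real_derivative_powr)
  have "continuous_on {u..v} (\<lambda>t. t powr p)"
    using assms by (intro continuous_on_powr') (auto intro: continuous_intros)
  moreover have "(\<lambda>t. t powr p) differentiable (at t)" if "u < t" for t
    using deriv[of t] that assms real_differentiable_def by force
  ultimately obtain l z where z: "u < z" "z < v" "DERIV (\<lambda>t. t powr p) z :> l"
    "v powr p - u powr p = (v - u) * l"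
    using MVT[OF assms(3)] by blast
  moreover have "l = p * z powr (p - 1)"
    using DERIV_unique[OF z(3) deriv] z assms by simp
  ultimately show ?thesis using that by blast
qed

lemma powr_midpoint_less:
  fixes p u v :: real
  assumes "p > 1" "0 \<le> u" "u < v"
  shows "((u + v) / 2) powr p < (u powr p + v powr p) / 2"
proof -
  define m where "m = (u + v) / 2"
  have m: "u < m" "m < v" "m - u = v - m"
    using assms by (auto simp: m_def field_simps)
  obtain z1 where z1: "u < z1" "z1 < m" "m powr p - u powr p = (m - u) * (p * z1 powr (p - 1))"
    using powr_diff_mean_value[OF assms(1,2) m(1)] .
  obtain z2 where z2: "m < z2" "z2 < v" "v powr p - m powr p = (v - m) * (p * z2 powr (p - 1))"
    using powr_diff_mean_value[OF assms(1) _ m(2)] m assms by auto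
  have "z1 powr (p - 1) < z2 powr (p - 1)"
    using z1 z2 assms by (intro powr_less_mono2) auto
  then have "(v - m) * (p * z1 powr (p - 1)) < (v - m) * (p * z2 powr (p - 1))"
    using m assms by (intro mult_strict_left_mono) auto
  then have "m powr p - u powr p < v powr p - m powr p"
    unfolding z1(3) z2(3) m(3) .
  then show ?thesis
    by (simp add: m_def)
qed

lemma powr_midpoint_le:
  fixes p u v :: real
  assumes "p > 1" "0 \<le> u" "0 \<le> v"
  shows "((u + v) / 2) powr p \<le> (u powr p + v powr p) / 2"
proof (cases u v rule: linorder_cases)
  case less
  then show ?thesis using powr_midpoint_less[of p u v] assms by simp
next
  case greater
  then show ?thesis using powr_midpoint_less[of p v u] assms by (simp add: add.commute)
qed simp

lemma abs_powr_midpoint_le: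
  fixes p a b :: real
  assumes "p > 1"
  shows "\<bar>(a + b) / 2\<bar> powr p \<le> (\<bar>a\<bar> powr p + \<bar>b\<bar> powr p) / 2"
proof -
  have "\<bar>(a + b) / 2\<bar> powr p \<le> ((\<bar>a\<bar> + \<bar>b\<bar>) / 2) powr p"
    using assms by (intro powr_mono2) auto
  also have "\<dots> \<le> (\<bar>a\<bar> powr p + \<bar>b\<bar> powr p) / 2"
    using assms by (intro powr_midpoint_le) auto
  finally show ?thesis .
qed

lemma abs_powr_midpoint_less:
  fixes p a b :: real
  assumes "p > 1" "a \<noteq> b"
  shows "\<bar>(a + b) / 2\<bar> powr p < (\<bar>a\<bar> powr p + \<bar>b\<bar> powr p) / 2"
proof (cases "\<bar>a\<bar> = \<bar>b\<bar>")
  case True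
  with assms have "b = - a" "a \<noteq> 0"
    by (auto simp: abs_eq_iff)
  then show ?thesis
    using True by simp
next
  case False
  have "\<bar>(a + b) / 2\<bar> powr p \<le> ((\<bar>a\<bar> + \<bar>b\<bar>) / 2) powr p"
    using assms by (intro powr_mono2) auto
  also have "\<dots> < (\<bar>a\<bar> powr p + \<bar>b\<bar> powr p) / 2"
    using False powr_midpoint_less[OF assms(1), of "\<bar>a\<bar>" "\<bar>b\<bar>"]
      powr_midpoint_less[OF assms(1), of "\<bar>b\<bar>" "\<bar>a\<bar>"]
    by (cases "\<bar>a\<bar> < \<bar>b\<bar>") (auto simp: add.commute)
  finally show ?thesis .
qed

lemma has_real_derivative_abs_powr_at_0:
  fixes p :: real
  assumes "p > 1"
  shows "((\<lambda>t. \<bar>t\<bar> powr p) has_real_derivative 0) (at 0)"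
proof -
  have "((\<lambda>h. \<bar>h\<bar> powr (p - 1)) \<longlongrightarrow> 0) (at (0::real))"
    using assms by (intro tendsto_zero_powrI tendsto_rabs_zero) (auto intro: tendsto_ident_at)
  then have "((\<lambda>h. \<bar>\<bar>h\<bar> powr p / h\<bar>) \<longlongrightarrow> 0) (at (0::real))"
    by (rule Lim_transform_eventually) (auto simp: eventually_at_filter powr_diff abs_divide)
  then have "((\<lambda>h. \<bar>h\<bar> powr p / h) \<longlongrightarrow> 0) (at (0::real))"
    by (rule tendsto_rabs_zero_cancel)
  then show ?thesis
    unfolding DERIV_def by simp
qed

section \<open>The \<open>p\<close>-th power of the \<open>l\<^sub>p\<close> norm\<close>

definition psum :: "real \<Rightarrow> real ^ 'n \<Rightarrow> real" where
  "psum p x = (\<Sum>i\<in>UNIV. \<bar>x $ i\<bar> powr p)"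

lemma pnorm_le_iff_psum_le:
  assumes "p > 0" "\<eta> > 0"
  shows "pnorm p x \<le> \<eta> \<longleftrightarrow> psum p x \<le> \<eta> powr p"
proof -
  have "psum p x \<ge> 0"
    unfolding psum_def by (intro sum_nonneg) auto
  moreover have "pnorm p x = psum p x powr (1 / p)"
    by (simp add: pnorm_def psum_def)
  ultimately show ?thesis
    using assms powr_mono2[of p "psum p x powr (1 / p)" \<eta>]
      powr_mono2[of "1 / p" "psum p x" "\<eta> powr p"]
    by (auto simp: powr_powr)
qed

lemma continuous_on_psum:
  assumes "p > 0"
  shows "continuous_on S (psum p)"
  unfolding psum_def using assms
  by (intro continuous_on_sum continuous_on_powr' continuous_intros) auto

lemma compact_psum_sublevel:
  assumes "p > 0"
  shows "compact {x :: real ^ 'n. psum p x \<le> E}"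
proof -
  have coord: "\<bar>x $ i\<bar> \<le> E powr (1 / p)" if "psum p x \<le> E" for x :: "real ^ 'n" and i
  proof -
    have "\<bar>x $ i\<bar> powr p \<le> psum p x"
      unfolding psum_def by (rule member_le_sum) auto
    with that have "\<bar>x $ i\<bar> powr p \<le> E"
      by linarith
    then have "(\<bar>x $ i\<bar> powr p) powr (1 / p) \<le> E powr (1 / p)"
      using assms by (intro powr_mono2) auto
    then show ?thesis
      using assms by (simp add: powr_powr)
  qed
  have "norm x \<le> real CARD('n) * E powr (1 / p)" if "psum p x \<le> E" for x :: "real ^ 'n"
    using norm_le_l1_cart[of x] sum_mono[of UNIV "\<lambda>i. \<bar>x $ i\<bar>" "\<lambda>_. E powr (1 / p)"]
      coord[OF that] by simp
  then have "bounded {x :: real ^ 'n. psum p x \<le> E}"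
    unfolding bounded_iff by blast
  moreover have "closed {x :: real ^ 'n. psum p x \<le> E}"
    using continuous_on_psum[OF assms] by (intro closed_Collect_le) (auto intro: continuous_intros)
  ultimately show ?thesis
    by (simp add: compact_eq_bounded_closed)
qed

lemma psum_midpoint_le:
  assumes "p > 1"
  shows "psum p ((1/2) *\<^sub>R (x + z)) \<le> (psum p x + psum p z) / 2"
  unfolding psum_def sum_divide_distrib sum.distrib[symmetric]
  using abs_powr_midpoint_le[OF assms] by (intro sum_mono) simp

lemma psum_midpoint_less:
  assumes "p > 1" "x \<noteq> z"
  shows "psum p ((1/2) *\<^sub>R (x + z)) < (psum p x + psum p z) / 2"
proof -
  obtain i where "x $ i \<noteq> z $ i"
    using assms(2) by (metis vec_eq_iff)
  then show ?thesis
    unfolding psum_def sum_divide_distrib sum.distrib[symmetric]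
    using abs_powr_midpoint_le[OF assms(1)] abs_powr_midpoint_less[OF assms(1)]
    by (intro sum_strict_mono_ex1) (auto intro!: exI[of _ i])
qed

lemma psum_scaleR:
  assumes "s \<ge> 0"
  shows "psum p (s *\<^sub>R x) = s powr p * psum p x"
  unfolding psum_def using assms by (simp add: sum_distrib_left abs_mult powr_mult)

lemma psum_add_axis:
  assumes "x $ i = 0"
  shows "psum p (x + t *\<^sub>R axis i 1) = psum p x + \<bar>t\<bar> powr p"
proof -
  have "\<bar>(x + t *\<^sub>R axis i 1) $ j\<bar> powr p = \<bar>x $ j\<bar> powr p + (if j = i then \<bar>t\<bar> powr p else 0)" for j
    using assms by (auto simp: axis_def)
  then show ?thesis
    unfolding psum_def by (simp add: sum.distrib)
qed

section \<open>Least squares over an \<open>l\<^sub>p\<close> ball\<close>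

lemma minimizers_same_image:
  fixes A :: "real ^ 'n ^ 'm"
  assumes midpoint: "\<And>x z. x \<in> Q \<Longrightarrow> z \<in> Q \<Longrightarrow> (1/2) *\<^sub>R (x + z) \<in> Q"
    and "x1 \<in> Q" "x2 \<in> Q"
    and min1: "\<And>z. z \<in> Q \<Longrightarrow> norm (A *v x1 - y) \<le> norm (A *v z - y)"
    and min2: "\<And>z. z \<in> Q \<Longrightarrow> norm (A *v x2 - y) \<le> norm (A *v z - y)"
  shows "A *v x1 = A *v x2"
proof -
  define u v where "u = A *v x1 - y" and "v = A *v x2 - y"
  have "norm u = norm v"
    using min1 min2 \<open>x1 \<in> Q\<close> \<open>x2 \<in> Q\<close> unfolding u_def v_def by (meson antisym)
  moreover have "A *v ((1/2) *\<^sub>R (x1 + x2)) - y = (1/2) *\<^sub>R (u + v)"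
    unfolding u_def v_def
    by (simp add: matrix_vector_mult_scaleR matrix_vector_right_distrib vec_eq_iff field_simps)
  then have "2 * norm u \<le> norm (u + v)"
    using min1[OF midpoint[OF \<open>x1 \<in> Q\<close> \<open>x2 \<in> Q\<close>]] by (simp add: u_def)
  then have "(2 * norm u)\<^sup>2 \<le> (norm (u + v))\<^sup>2"
    by (intro power_mono) auto
  moreover have "(norm (u + v))\<^sup>2 + (norm (u - v))\<^sup>2 = 2 * (norm u)\<^sup>2 + 2 * (norm v)\<^sup>2"
    by (simp add: power2_norm_eq_inner inner_add_left inner_add_right inner_diff_left
        inner_diff_right inner_commute)
  ultimately have "(norm (u - v))\<^sup>2 \<le> 0"
    by (simp add: power2_eq_square)
  then show ?thesis
    by (simp add: u_def v_def)
qed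

text \<open>A minimiser strictly inside the ball can be moved towards a solution \<open>x\<^sub>0\<close> of \<open>A x = y\<close>.\<close>

lemma interior_minimizer_solves:
  fixes A :: "real ^ 'n ^ 'm"
  assumes p: "p > 0" and x0: "A *v x0 = y" and inside: "psum p x < E"
    and min: "\<And>z. psum p z \<le> E \<Longrightarrow> norm (A *v x - y) \<le> norm (A *v z - y)"
  shows "A *v x = y"
proof (rule ccontr)
  assume ne: "A *v x \<noteq> y"
  have "((\<lambda>t. x + t *\<^sub>R (x0 - x)) \<longlongrightarrow> x + 0 *\<^sub>R (x0 - x)) (at_right (0::real))"
    by (intro tendsto_intros)
  then have "((\<lambda>t. psum p (x + t *\<^sub>R (x0 - x))) \<longlongrightarrow> psum p x) (at_right (0::real))"
    using continuous_on_psum[OF p, of UNIV] by (auto intro: continuous_on_tendsto_compose)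
  then have "\<forall>\<^sub>F t in at_right 0. psum p (x + t *\<^sub>R (x0 - x)) < E"
    using inside by (rule order_tendstoD)
  moreover have "\<forall>\<^sub>F t in at_right (0::real). 0 < t \<and> t < 1"
    by (auto simp: eventually_at_right_field intro!: exI[of _ 1])
  ultimately have "\<forall>\<^sub>F t in at_right (0::real). psum p (x + t *\<^sub>R (x0 - x)) < E \<and> 0 < t \<and> t < 1"
    by eventually_elim auto
  then obtain t where t: "psum p (x + t *\<^sub>R (x0 - x)) < E" "0 < t" "t < 1"
    using eventually_happens'[of "at_right (0::real)"] by auto
  have "A *v (x + t *\<^sub>R (x0 - x)) - y = (1 - t) *\<^sub>R (A *v x - y)"
    using x0 by (simp add: matrix_vector_mult_scaleR matrix_vector_right_distrib
        matrix_vector_mult_diff_distrib algebra_simps)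
  then have "norm (A *v (x + t *\<^sub>R (x0 - x)) - y) < norm (A *v x - y)"
    using t ne by simp
  with min[of "x + t *\<^sub>R (x0 - x)"] t(1) show False
    by simp
qed

text \<open>
  The curve \<open>s(t) (x + t e\<^sub>i)\<close> stays on the sphere, and \<open>s(t) = 1 + o(t)\<close> because \<open>p > 1\<close>;
  so the squared residual along it has derivative \<open>2 a\<^sub>i \<bullet> r\<close> at the minimum \<open>t = 0\<close>.
\<close>

lemma column_orthogonal_residual:
  fixes A :: "real ^ 'n ^ 'm"
  assumes p: "p > 1" and E: "E > 0" and x: "psum p x = E" "x $ i = 0"
    and min: "\<And>z. psum p z \<le> E \<Longrightarrow> norm (A *v x - y) \<le> norm (A *v z - y)"
  shows "column i A \<bullet> (A *v x - y) = 0"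
proof -
  define a w where "a = column i A" and "w = A *v x"
  define s where "s = (\<lambda>t. (E / (E + \<bar>t\<bar> powr p)) powr (1 / p))"
  define f where "f = (\<lambda>t. (norm (s t *\<^sub>R (w + t *\<^sub>R a) - y))\<^sup>2)"
  have denom_pos: "E + \<bar>t\<bar> powr p > 0" for t
    using E by (simp add: add_pos_nonneg)
  have "psum p (s t *\<^sub>R (x + t *\<^sub>R axis i 1)) = E" for t
    using p E denom_pos[of t] by (simp add: s_def psum_scaleR psum_add_axis x powr_powr)
  then have f_min: "f 0 \<le> f t" for t
    using min[of "s t *\<^sub>R (x + t *\<^sub>R axis i 1)"] E
    by (simp add: f_def s_def w_def a_def matrix_vector_mult_scaleR matrix_vector_right_distrib
        matrix_vector_mult_basis)
  have s0: "s 0 = 1"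
    using E by (simp add: s_def)
  have s': "(s has_real_derivative 0) (at 0)"
  proof -
    have "((\<lambda>t. E / (E + \<bar>t\<bar> powr p)) has_real_derivative 0) (at 0)"
      using DERIV_divide[OF DERIV_const DERIV_add[OF DERIV_const has_real_derivative_abs_powr_at_0[OF p]],
          of E E] E by simp
    from DERIV_fun_powr[OF this, of "1 / p"] show ?thesis
      using E by (simp add: s_def)
  qed
  have "f = (\<lambda>t. (s t)\<^sup>2 * (w \<bullet> w + 2 * t * (a \<bullet> w) + t\<^sup>2 * (a \<bullet> a))
      - 2 * s t * (w \<bullet> y + t * (a \<bullet> y)) + y \<bullet> y)"
    unfolding f_def power2_norm_eq_inner
    by (intro ext) (simp add: inner_add_left inner_add_right inner_diff_left inner_diff_right
        inner_commute algebra_simps power2_eq_square)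
  then have "(f has_real_derivative 2 * (a \<bullet> (w - y))) (at 0)"
    by (auto intro!: derivative_eq_intros s' simp: s0 inner_diff_right)
  then have "2 * (a \<bullet> (w - y)) = 0"
    by (rule DERIV_local_min[of _ _ _ 1]) (simp_all add: f_min)
  then show ?thesis
    by (simp add: a_def w_def)
qed

lemma constr_opt_iff_psum:
  assumes "p > 0" "\<eta> > 0"
  shows "constr_opt p \<eta> A y x \<longleftrightarrow> psum p x \<le> \<eta> powr p \<and>
     (\<forall>z. psum p z \<le> \<eta> powr p \<longrightarrow> norm (A *v x - y) \<le> norm (A *v z - y))"
  unfolding constr_opt_def by (simp add: pnorm_le_iff_psum_le[OF assms])

lemma Inf_pnorm_solutions_le:
  assumes "A *v x = y"
  shows "Inf {pnorm p x | x :: real ^ 'n. A *v x = y} \<le> pnorm p x"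
  using assms by (intro cInf_lower bdd_belowI[of _ 0]) (auto simp: pnorm_def)

lemma constr_opt_residual_nonzero:
  assumes "\<eta> < Inf {pnorm p x | x :: real ^ 'n. A *v x = y}" "constr_opt p \<eta> A y x"
  shows "A *v x \<noteq> y"
  using assms Inf_pnorm_solutions_le[of A x y p] by (auto simp: constr_opt_def)

lemma constr_opt_on_sphere:
  fixes A :: "real ^ 'n ^ 'm"
  assumes p: "p > 1" and \<eta>: "\<eta> > 0" and "y \<in> range ((*v) A)"
    and below: "\<eta> < Inf {pnorm p x | x :: real ^ 'n. A *v x = y}" and opt: "constr_opt p \<eta> A y x"
  shows "psum p x = \<eta> powr p"
proof (rule ccontr)
  obtain x0 where x0: "A *v x0 = y"
    using assms(3) by auto
  have p0: "p > 0"
    using p by simp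
  have le: "psum p x \<le> \<eta> powr p"
    and min: "\<And>z. psum p z \<le> \<eta> powr p \<Longrightarrow> norm (A *v x - y) \<le> norm (A *v z - y)"
    using opt by (auto simp: constr_opt_iff_psum[OF p0 \<eta>])
  assume "psum p x \<noteq> \<eta> powr p"
  with le have "psum p x < \<eta> powr p"
    by simp
  then have "A *v x = y"
    using interior_minimizer_solves[OF p0 x0 _ min] by blast
  with constr_opt_residual_nonzero[OF below opt] show False ..
qed

lemma ex1_constr_opt:
  fixes A :: "real ^ 'n ^ 'm"
  assumes p: "p > 1" and \<eta>: "\<eta> > 0" and range: "y \<in> range ((*v) A)"
    and below: "\<eta> < Inf {pnorm p x | x :: real ^ 'n. A *v x = y}"
  shows "\<exists>!x. constr_opt p \<eta> A y x"
proof -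
  define K where "K = {x :: real ^ 'n. psum p x \<le> \<eta> powr p}"
  have p0: "p > 0"
    using p by simp
  have opt_iff: "constr_opt p \<eta> A y x \<longleftrightarrow> x \<in> K \<and> (\<forall>z\<in>K. norm (A *v x - y) \<le> norm (A *v z - y))"
    for x
    by (auto simp: K_def constr_opt_iff_psum[OF p0 \<eta>])
  have K_midpoint: "(1/2) *\<^sub>R (x + z) \<in> K" if "x \<in> K" "z \<in> K" for x z
    using psum_midpoint_le[OF p, of x z] that by (simp add: K_def)
  have "compact K"
    unfolding K_def using p0 by (rule compact_psum_sublevel)
  moreover have "0 \<in> K"
    using \<eta> by (simp add: K_def psum_def)
  moreover have "continuous_on K (\<lambda>z. norm (A *v z - y))"
    by (intro continuous_on_norm continuous_on_diff continuous_on_const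
        matrix_vector_mult_linear_continuous_on)
  ultimately obtain x where x: "constr_opt p \<eta> A y x"
    using continuous_attains_inf[of K "\<lambda>z. norm (A *v z - y)"] opt_iff by blast
  moreover have "x' = x" if x': "constr_opt p \<eta> A y x'" for x'
  proof (rule ccontr)
    assume "x' \<noteq> x"
    define m where "m = (1/2) *\<^sub>R (x' + x)"
    have "A *v x' = A *v x"
      using K_midpoint x x' opt_iff by (intro minimizers_same_image[where Q = K]) auto
    then have "A *v m = A *v x"
      by (simp add: m_def matrix_vector_mult_scaleR matrix_vector_right_distrib scaleR_2[symmetric])
    then have "constr_opt p \<eta> A y m"
      using x x' opt_iff K_midpoint by (simp add: m_def)
    moreover have "psum p m < \<eta> powr p"
      using psum_midpoint_less[OF p \<open>x' \<noteq> x\<close>] constr_opt_on_sphere[OF p \<eta> range below] x x'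
      by (simp add: m_def)
    ultimately show False
      using constr_opt_on_sphere[OF p \<eta> range below] by fastforce
  qed
  ultimately show ?thesis
    by blast
qed

section \<open>Sets meeting every line of a direction at most once are null\<close>

lemma emeasure_lborel_translate:
  fixes S :: "'a::euclidean_space set"
  assumes "S \<in> sets borel"
  shows "emeasure lborel ((+) c -` S) = emeasure lborel S"
proof -
  have "(+) c \<in> borel_measurable lborel"
    by measurable
  from emeasure_distr[OF this assms] show ?thesis
    by (simp add: lborel_distr_plus)
qed

lemma disjoint_translates_meets_lines_once:
  fixes S :: "'a::real_vector set"
  assumes once: "\<And>q t. q \<in> S \<Longrightarrow> q + t *\<^sub>R w \<in> S \<Longrightarrow> t = 0" and "n > 0"
  shows "disjoint_family_on (\<lambda>k. (+) ((real k / real n) *\<^sub>R w) -` S) {..<n}"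
  unfolding disjoint_family_on_def
proof (intro ballI impI)
  fix k l :: nat assume "k \<noteq> l"
  show "(+) ((real k / real n) *\<^sub>R w) -` S \<inter> (+) ((real l / real n) *\<^sub>R w) -` S = {}"
  proof safe
    fix q assume q: "(real k / real n) *\<^sub>R w + q \<in> S" "(real l / real n) *\<^sub>R w + q \<in> S"
    have shift: "(real k / real n) *\<^sub>R w + q + ((real l - real k) / real n) *\<^sub>R w
        = (real l / real n) *\<^sub>R w + q"
      by (simp add: diff_divide_distrib scaleR_left_diff_distrib)
    have "(real l - real k) / real n = 0"
      using q(2) unfolding shift[symmetric] by (rule once[OF q(1)])
    with \<open>k \<noteq> l\<close> \<open>n > 0\<close> show "q \<in> {}"
      by simp
  qed
qed

text \<open>The \<open>n\<close> translates by \<open>(k/n) w\<close>, \<open>k < n\<close>, are disjoint and lie in one ball.\<close>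

lemma of_nat_mult_emeasure_le_meets_lines_once:
  fixes S :: "'a::euclidean_space set"
  assumes S: "S \<in> sets borel" "S \<subseteq> ball 0 R"
    and once: "\<And>q t. q \<in> S \<Longrightarrow> q + t *\<^sub>R w \<in> S \<Longrightarrow> t = 0"
  shows "of_nat n * emeasure lborel S \<le> emeasure lborel (ball (0::'a) (R + norm w))"
proof (cases "n = 0")
  case False
  define P where "P k = (+) ((real k / real n) *\<^sub>R w) -` S" for k :: nat
  have P_sets: "P k \<in> sets lborel" for k
  proof -
    have "(+) ((real k / real n) *\<^sub>R w) \<in> borel_measurable lborel"
      by measurable
    from measurable_sets[OF this S(1)] show ?thesis
      by (simp add: P_def)
  qed
  have "P k \<subseteq> ball (0::'a) (R + norm w)" if "k < n" for k
  proof
    fix q assume "q \<in> P k"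
    then have "norm ((real k / real n) *\<^sub>R w + q) < R"
      using S(2) by (auto simp: P_def)
    moreover have "norm ((real k / real n) *\<^sub>R w) \<le> norm w"
      using that mult_left_le_one_le[of "norm w" "real k / real n"] by simp
    ultimately show "q \<in> ball 0 (R + norm w)"
      using norm_triangle_ineq4[of "(real k / real n) *\<^sub>R w + q" "(real k / real n) *\<^sub>R w"] by simp
  qed
  then have "emeasure lborel (\<Union>k<n. P k) \<le> emeasure lborel (ball (0::'a) (R + norm w))"
    by (intro emeasure_mono) auto
  moreover have "disjoint_family_on P {..<n}"
    unfolding P_def by (rule disjoint_translates_meets_lines_once) (use once False in auto)
  then have "emeasure lborel (\<Union>k<n. P k) = of_nat n * emeasure lborel S"
    using P_sets by (subst sum_emeasure[symmetric]) (auto simp: P_def emeasure_lborel_translate[OF S(1)])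
  ultimately show ?thesis
    by simp
qed simp

lemma emeasure_bounded_meets_lines_once:
  fixes S :: "'a::euclidean_space set"
  assumes "S \<in> sets borel" "S \<subseteq> ball 0 R"
    and "\<And>q t. q \<in> S \<Longrightarrow> q + t *\<^sub>R w \<in> S \<Longrightarrow> t = 0"
  shows "emeasure lborel S = 0"
proof (rule ccontr)
  have "(SUP n. of_nat n * emeasure lborel S) \<le> emeasure lborel (ball (0::'a) (R + norm w))"
    using of_nat_mult_emeasure_le_meets_lines_once[OF assms] by (rule SUP_least)
  moreover assume "emeasure lborel S \<noteq> 0"
  ultimately have "emeasure lborel (ball (0::'a) (R + norm w)) = top"
    by (simp add: SUP_mult_right_ennreal[symmetric] ennreal_SUP_of_nat_eq_top top_unique)
  with emeasure_bounded_finite[of "ball (0::'a) (R + norm w)"] show False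
    by simp
qed

lemma null_sets_meets_lines_once:
  fixes S :: "'a::euclidean_space set"
  assumes "S \<in> sets borel" and "\<And>q t. q \<in> S \<Longrightarrow> q + t *\<^sub>R w \<in> S \<Longrightarrow> t = 0"
  shows "S \<in> null_sets lborel"
proof -
  have "S \<inter> ball 0 (real M) \<in> null_sets lborel" for M :: nat
  proof (rule null_setsI)
    show "emeasure lborel (S \<inter> ball 0 (real M)) = 0"
      using assms by (intro emeasure_bounded_meets_lines_once[where w = w]) auto
  qed (use assms in auto)
  moreover have "S = (\<Union>M. S \<inter> ball 0 (real M))"
    using reals_Archimedean2 by fastforce
  ultimately show ?thesis
    by (metis null_sets_UN)
qed

section \<open>The exceptional set\<close>

lemma continuous_on_matrix_vector_mult [continuous_intros]:
  fixes f :: "'a::topological_space \<Rightarrow> real ^ 'n ^ 'm" and g :: "'a \<Rightarrow> real ^ 'n"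
  assumes "continuous_on S f" "continuous_on S g"
  shows "continuous_on S (\<lambda>q. f q *v g q)"
  unfolding matrix_vector_mult_def
  by (intro continuous_on_vec_lambda continuous_on_sum continuous_on_mult
      continuous_on_component assms)

lemma matrix_unit_mult_vector:
  "(axis j (axis i 1) :: real ^ 'n ^ 'm) *v z = (z $ i) *\<^sub>R axis j 1"
  by (auto simp: vec_eq_iff matrix_vector_mult_def axis_def if_distrib[of "\<lambda>x. x * _"] cong: if_cong)

lemma column_add_scaleR_matrix_unit:
  fixes A :: "real ^ 'n ^ 'm"
  shows "column i (A + t *\<^sub>R axis j (axis i 1)) = column i A + t *\<^sub>R axis j 1"
  by (simp add: vec_eq_iff column_def axis_def)

text \<open>The closed condition \<open>\<bar>r\<^sub>j\<bar> \<ge> 1/(k+1)\<close> stands in for \<open>r\<^sub>j \<noteq> 0\<close>, so that the projection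
  \<open>exceptional_set\<close> of these triples is closed.\<close>

definition exceptional_triples :: "real \<Rightarrow> real \<Rightarrow> 'n \<Rightarrow> 'm \<Rightarrow> nat \<Rightarrow>
    ((real ^ 'n) \<times> (real ^ 'n ^ 'm) \<times> (real ^ 'm)) set" where
  "exceptional_triples p E i j k = {(x, A, y). x $ i = 0 \<and>
     (\<forall>z. psum p z \<le> E \<and> z $ i = 0 \<longrightarrow> norm (A *v x - y) \<le> norm (A *v z - y)) \<and>
     column i A \<bullet> (A *v x - y) = 0 \<and>
     inverse (real (Suc k)) \<le> \<bar>(A *v x - y) $ j\<bar>}"

definition exceptional_set :: "real \<Rightarrow> real \<Rightarrow> 'n \<Rightarrow> 'm \<Rightarrow> nat \<Rightarrow> ((real ^ 'n ^ 'm) \<times> (real ^ 'm)) set" where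
  "exceptional_set p E i j k =
     {Ay. \<exists>x. x \<in> {x. psum p x \<le> E} \<and> (x, Ay) \<in> exceptional_triples p E i j k}"

lemma closed_exceptional_triples:
  fixes i :: "'n::finite" and j :: "'m::finite"
  shows "closed (exceptional_triples p E i j k)"
proof -
  have "closed {q :: (real ^ 'n) \<times> (real ^ 'n ^ 'm) \<times> (real ^ 'm). fst q $ i = 0 \<and>
     (\<forall>z. psum p z \<le> E \<and> z $ i = 0 \<longrightarrow>
        norm (fst (snd q) *v fst q - snd (snd q)) \<le> norm (fst (snd q) *v z - snd (snd q))) \<and>
     column i (fst (snd q)) \<bullet> (fst (snd q) *v fst q - snd (snd q)) = 0 \<and>
     inverse (real (Suc k)) \<le> \<bar>(fst (snd q) *v fst q - snd (snd q)) $ j\<bar>}"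
    unfolding column_def
    by (intro closed_Collect_conj closed_Collect_all closed_Collect_imp closed_Collect_eq
        closed_Collect_le continuous_intros continuous_on_inner) auto
  then show ?thesis
    by (simp add: exceptional_triples_def case_prod_unfold)
qed

lemma exceptional_set_borel:
  assumes "p > 0"
  shows "exceptional_set p E i j k \<in> sets borel"
  unfolding exceptional_set_def
  by (intro borel_closed closed_compact_projection compact_psum_sublevel assms
      closed_exceptional_triples)

text \<open>
  Changing \<open>A\<^sub>j\<^sub>i\<close> by \<open>t\<close> leaves the problem restricted to \<open>x\<^sub>i = 0\<close>, hence its (unique) residual
  \<open>r\<close>, unchanged, but shifts \<open>a\<^sub>i \<bullet> r\<close> by \<open>t r\<^sub>j\<close>.
\<close>

lemma exceptional_set_meets_lines_once:
  fixes A :: "real ^ 'n ^ 'm"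
  assumes p: "p > 1"
    and S: "(A, y) \<in> exceptional_set p E i j k"
    and S': "(A + t *\<^sub>R axis j (axis i 1), y) \<in> exceptional_set p E i j k"
  shows "t = 0"
proof -
  define A' where "A' = A + t *\<^sub>R axis j (axis i 1)"
  define Q where "Q = {z. psum p z \<le> E \<and> z $ i = 0}"
  obtain x where x: "x \<in> Q" "\<And>z. z \<in> Q \<Longrightarrow> norm (A *v x - y) \<le> norm (A *v z - y)"
    "column i A \<bullet> (A *v x - y) = 0" "inverse (real (Suc k)) \<le> \<bar>(A *v x - y) $ j\<bar>"
    using S by (auto simp: Q_def exceptional_set_def exceptional_triples_def)
  obtain x' where x': "x' \<in> Q" "\<And>z. z \<in> Q \<Longrightarrow> norm (A' *v x' - y) \<le> norm (A' *v z - y)"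
    "column i A' \<bullet> (A' *v x' - y) = 0"
    using S' by (auto simp: Q_def A'_def exceptional_set_def exceptional_triples_def)
  have same_on_Q: "A' *v z = A *v z" if "z \<in> Q" for z
    using that by (simp add: Q_def A'_def matrix_vector_mult_add_rdistrib
        scaleR_matrix_vector_assoc[symmetric] matrix_unit_mult_vector)
  have "A *v x = A *v x'"
  proof (rule minimizers_same_image[where Q = Q])
    show "(1/2) *\<^sub>R (a + b) \<in> Q" if "a \<in> Q" "b \<in> Q" for a b
      using psum_midpoint_le[OF p, of a b] that by (auto simp: Q_def)
  qed (use x x' same_on_Q in auto)
  define r where "r = A *v x - y"
  have "A' *v x' - y = r"
    using same_on_Q[OF x'(1)] \<open>A *v x = A *v x'\<close> by (simp add: r_def)
  then have "column i A \<bullet> r + t * r $ j = 0"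
    using x'(3) by (simp add: A'_def column_add_scaleR_matrix_unit inner_add_left inner_axis')
  moreover have "r $ j \<noteq> 0"
    using x(4) by (auto simp: r_def dest: order.strict_trans1[rotated])
  ultimately show "t = 0"
    using x(3) by (simp add: r_def)
qed

lemma null_sets_exceptional_set:
  fixes i :: "'n::finite" and j :: "'m::finite"
  assumes "p > 1"
  shows "exceptional_set p E i j k \<in> null_sets lborel"
proof (rule null_sets_meets_lines_once[where w = "(axis j (axis i 1), 0)"])
  show "exceptional_set p E i j k \<in> sets borel"
    using assms by (intro exceptional_set_borel) simp
  fix q :: "(real ^ 'n ^ 'm) \<times> (real ^ 'm)" and t :: real
  assume "q \<in> exceptional_set p E i j k" "q + t *\<^sub>R (axis j (axis i 1), 0) \<in> exceptional_set p E i j k"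
  then show "t = 0"
    using exceptional_set_meets_lines_once[OF assms, of "fst q" "snd q"] by (cases q) simp
qed

lemma constr_opt_zero_coordinate_exceptional:
  fixes A :: "real ^ 'n ^ 'm"
  assumes p: "p > 1" and \<eta>: "\<eta> > 0" and range: "y \<in> range ((*v) A)"
    and below: "\<eta> < Inf {pnorm p x | x :: real ^ 'n. A *v x = y}"
    and opt: "constr_opt p \<eta> A y x" and "x $ i = 0"
  obtains j k where "(A, y) \<in> exceptional_set p (\<eta> powr p) i j k"
proof -
  have p0: "p > 0"
    using p by simp
  have le: "psum p x \<le> \<eta> powr p"
    and min: "\<And>z. psum p z \<le> \<eta> powr p \<Longrightarrow> norm (A *v x - y) \<le> norm (A *v z - y)"
    using opt by (auto simp: constr_opt_iff_psum[OF p0 \<eta>])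
  have "column i A \<bullet> (A *v x - y) = 0"
    using column_orthogonal_residual[OF p _ constr_opt_on_sphere[OF p \<eta> range below opt] \<open>x $ i = 0\<close> min]
      \<eta> by simp
  moreover have "A *v x - y \<noteq> 0"
    using constr_opt_residual_nonzero[OF below opt] by simp
  then obtain j where j: "(A *v x - y) $ j \<noteq> 0"
    by (metis vec_eq_iff zero_index)
  moreover obtain k where "inverse (real (Suc k)) < \<bar>(A *v x - y) $ j\<bar>"
    using reals_Archimedean[of "\<bar>(A *v x - y) $ j\<bar>"] j by auto
  ultimately have "(A, y) \<in> exceptional_set p (\<eta> powr p) i j k"
    using le min \<open>x $ i = 0\<close> by (auto simp: exceptional_set_def exceptional_triples_def)
  then show ?thesis ..
qed

theorem theorem4p5:
  fixes p \<eta> :: real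
  assumes "p > 1" and "CARD('m::finite) \<le> CARD('n::finite)" and "\<eta> > 0"
  shows "AE Ay in (lborel :: ((real ^ 'n ^ 'm) \<times> (real ^ 'm)) measure).
           (snd Ay \<in> range (\<lambda>x. fst Ay *v x) \<and>
            \<eta> < Inf {pnorm p x | x :: real ^ 'n. fst Ay *v x = snd Ay})
           \<longrightarrow> (\<exists>!x. constr_opt p \<eta> (fst Ay) (snd Ay) x) \<and>
               (\<forall>x. constr_opt p \<eta> (fst Ay) (snd Ay) x \<longrightarrow> card (supp x) = CARD('n))"
proof -
  define N where "N = (\<Union>i j k. exceptional_set p (\<eta> powr p) (i :: 'n) (j :: 'm) k)"
  have "N \<in> null_sets lborel"
    unfolding N_def using null_sets_exceptional_set[OF assms(1)]
    by (intro null_sets_UN' null_sets_UN) auto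
  have supp_full: "card (supp x) = CARD('n)"
    if "y \<in> range ((*v) A)" "\<eta> < Inf {pnorm p x | x :: real ^ 'n. A *v x = y}"
      "constr_opt p \<eta> A y x" "(A, y) \<notin> N" for A y x
  proof -
    have "x $ i \<noteq> 0" for i
      using constr_opt_zero_coordinate_exceptional[OF assms(1,3) that(1-3), of i] that(4)
      by (auto simp: N_def)
    then show ?thesis
      by (simp add: supp_def)
  qed
  from AE_not_in[OF \<open>N \<in> null_sets lborel\<close>] show ?thesis
  proof eventually_elim
    case (elim Ay)
    obtain A y where Ay: "Ay = (A, y)"
      by (cases Ay)
    show ?case
      using elim ex1_constr_opt[OF assms(1,3), of y A] supp_full[of y A]
      unfolding Ay fst_conv snd_conv by blast
  qed
qed

end
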